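(* Let $X$ be a simplicial set, let $Y$ be a reduced $N$-simplicial set, and let $f\colon X\to Y$ be a simplicial map. Then $f$ is completely determined by its restriction to the $1$-skeleton of $X$.
   Context: A simplicial set $Y$ is reduced if $Y_0$ is a single point. The enumerating operator $E_n\colon Y_n\to Y_1\times\cdots\times Y_1$ ($n$ factors) sends an $n$-simplex $\sigma\colon\Delta[n]\to Y$ to the tuple of its consecutive edges $(\sigma|_{\{0,1\}},\dots,\sigma|_{\{n-1,n\}})$. $Y$ is an $N$-simplicial set if $E_n$ is injective for every $n\ge1$. *)

theory Defs
  imports Main
begin

text \<open>A simplicial operator theta : [m] -> [n] is a weakly monotone map
  {0..m} -> {0..n}; it is represented by a function nat => nat whose values
  outside {0..m} are irrelevant.\<close>
definition simp_op :: "nat \<Rightarrow> nat \<Rightarrow> (nat \<Rightarrow> nat) \<Rightarrow> bool" where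
  "simp_op m n \<theta> \<longleftrightarrow> (\<forall>i\<le>m. \<theta> i \<le> n) \<and> (\<forall>i j. i \<le> j \<longrightarrow> j \<le> m \<longrightarrow> \<theta> i \<le> \<theta> j)"

definition simplicial_set ::
  "(nat \<Rightarrow> 'a set) \<Rightarrow> (nat \<Rightarrow> nat \<Rightarrow> (nat \<Rightarrow> nat) \<Rightarrow> 'a \<Rightarrow> 'a) \<Rightarrow> bool" where
  "simplicial_set X act \<longleftrightarrow>
     (\<forall>m n \<theta> x. simp_op m n \<theta> \<longrightarrow> x \<in> X n \<longrightarrow> act m n \<theta> x \<in> X m) \<and>
     (\<forall>m n \<theta> \<theta>' x. x \<in> X n \<longrightarrow> (\<forall>i\<le>m. \<theta> i = \<theta>' i) \<longrightarrow> act m n \<theta> x = act m n \<theta>' x) \<and>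
     (\<forall>n x. x \<in> X n \<longrightarrow> act n n id x = x) \<and>
     (\<forall>k m n \<phi> \<theta> x. simp_op k m \<phi> \<longrightarrow> simp_op m n \<theta> \<longrightarrow> x \<in> X n \<longrightarrow>
         act k m \<phi> (act m n \<theta> x) = act k n (\<theta> \<circ> \<phi>) x)"

definition simplicial_map ::
  "(nat \<Rightarrow> 'a set) \<Rightarrow> (nat \<Rightarrow> nat \<Rightarrow> (nat \<Rightarrow> nat) \<Rightarrow> 'a \<Rightarrow> 'a) \<Rightarrow>
   (nat \<Rightarrow> 'b set) \<Rightarrow> (nat \<Rightarrow> nat \<Rightarrow> (nat \<Rightarrow> nat) \<Rightarrow> 'b \<Rightarrow> 'b) \<Rightarrow>
   (nat \<Rightarrow> 'a \<Rightarrow> 'b) \<Rightarrow> bool" where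
  "simplicial_map X actX Y actY f \<longleftrightarrow>
     (\<forall>n x. x \<in> X n \<longrightarrow> f n x \<in> Y n) \<and>
     (\<forall>m n \<theta> x. simp_op m n \<theta> \<longrightarrow> x \<in> X n \<longrightarrow> f m (actX m n \<theta> x) = actY m n \<theta> (f n x))"

definition reduced :: "(nat \<Rightarrow> 'a set) \<Rightarrow> bool" where
  "reduced X \<longleftrightarrow> (\<exists>y. X 0 = {y})"

definition edge :: "(nat \<Rightarrow> nat \<Rightarrow> (nat \<Rightarrow> nat) \<Rightarrow> 'a \<Rightarrow> 'a) \<Rightarrow> nat \<Rightarrow> nat \<Rightarrow> 'a \<Rightarrow> 'a" where
  "edge act n i \<sigma> = act 1 n (\<lambda>j. if j = 0 then i else Suc i) \<sigma>"

text \<open>Enumerating operator E_n : Y_n -> Y_1 x ... x Y_1 (n factors), tuples as lists.\<close>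
definition enum_op :: "(nat \<Rightarrow> nat \<Rightarrow> (nat \<Rightarrow> nat) \<Rightarrow> 'a \<Rightarrow> 'a) \<Rightarrow> nat \<Rightarrow> 'a \<Rightarrow> 'a list" where
  "enum_op act n \<sigma> = map (\<lambda>i. edge act n i \<sigma>) [0..<n]"

definition N_simplicial :: "(nat \<Rightarrow> 'a set) \<Rightarrow> (nat \<Rightarrow> nat \<Rightarrow> (nat \<Rightarrow> nat) \<Rightarrow> 'a \<Rightarrow> 'a) \<Rightarrow> bool" where
  "N_simplicial Y act \<longleftrightarrow> (\<forall>n\<ge>1. inj_on (enum_op act n) (Y n))"

end

theory Submission
  imports Defs
begin

text \<open>A simplicial map commutes with the enumerating operators, so two maps that agree on
  1-simplices have the same enumeration of every image simplex; injectivity of the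
  enumerating operator of an \<open>N\<close>-simplicial set then forces the images to coincide.\<close>

lemma simp_op_edge: "i < n \<Longrightarrow> simp_op 1 n (\<lambda>j. if j = 0 then i else Suc i)"
  unfolding simp_op_def by auto

lemma edge_in_simplices:
  assumes "simplicial_set X act" "x \<in> X n" "i < n"
  shows "edge act n i x \<in> X 1"
  using assms simp_op_edge unfolding simplicial_set_def edge_def by blast

lemma simplicial_map_edge:
  assumes "simplicial_map X actX Y actY f" "x \<in> X n" "i < n"
  shows "edge actY n i (f n x) = f 1 (edge actX n i x)"
  using assms simp_op_edge unfolding simplicial_map_def edge_def by simp

lemma simplicial_map_enum_op:
  assumes "simplicial_map X actX Y actY f" "x \<in> X n"
  shows "enum_op actY n (f n x) = map (f 1) (enum_op actX n x)"
  using simplicial_map_edge[OF assms] unfolding enum_op_def by simp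

lemma simplicial_maps_eq_if_eq_on_edges:
  assumes "simplicial_set X actX" "N_simplicial Y actY"
    and f: "simplicial_map X actX Y actY f" and g: "simplicial_map X actX Y actY g"
    and eq1: "\<forall>x\<in>X 1. f 1 x = g 1 x"
    and "n \<ge> 1" and x: "x \<in> X n"
  shows "f n x = g n x"
proof -
  have "\<forall>e\<in>set (enum_op actX n x). e \<in> X 1"
    using edge_in_simplices[OF assms(1) x] unfolding enum_op_def by auto
  then have "enum_op actY n (f n x) = enum_op actY n (g n x)"
    using eq1 by (simp add: simplicial_map_enum_op[OF f x] simplicial_map_enum_op[OF g x])
  moreover have "f n x \<in> Y n" "g n x \<in> Y n"
    using f g x unfolding simplicial_map_def by auto
  moreover have "inj_on (enum_op actY n) (Y n)"
    using assms(2) \<open>n \<ge> 1\<close> unfolding N_simplicial_def by simp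
  ultimately show ?thesis by (simp add: inj_on_def)
qed

theorem lemma4p6:
  fixes X :: "nat \<Rightarrow> 'a set" and actX :: "nat \<Rightarrow> nat \<Rightarrow> (nat \<Rightarrow> nat) \<Rightarrow> 'a \<Rightarrow> 'a"
    and Y :: "nat \<Rightarrow> 'b set" and actY :: "nat \<Rightarrow> nat \<Rightarrow> (nat \<Rightarrow> nat) \<Rightarrow> 'b \<Rightarrow> 'b"
    and f g :: "nat \<Rightarrow> 'a \<Rightarrow> 'b"
  assumes "simplicial_set X actX"
    and "simplicial_set Y actY" and "reduced Y" and "N_simplicial Y actY"
    and "simplicial_map X actX Y actY f" and "simplicial_map X actX Y actY g"
    and "\<forall>k\<le>1. \<forall>x\<in>X k. f k x = g k x"
  shows "\<forall>n. \<forall>x\<in>X n. f n x = g n x"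
proof (intro allI ballI)
  fix n x assume x: "x \<in> X n"
  show "f n x = g n x"
  proof (cases "n \<le> 1")
    case True
    then show ?thesis using assms(7) x by blast
  next
    case False
    then show ?thesis
      using simplicial_maps_eq_if_eq_on_edges[OF assms(1,4,5,6) _ _ x] assms(7) by simp
  qed
qed

end
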